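(* Let $\mathcal{H}$ be a finite hypothesis class and let $k\ge0$, $l\ge0$ be integers with $k\ge l$. Then \[ \mathrm{ELdim}(\mathcal{H}^l,k)\le e(k+1)\,|\mathcal{H}|^{\frac{1}{k+1-l}}. \]
   Context: Hypotheses are maps $\mathcal{X}\to\{-1,+1\}$. $\mathcal{C}^l$ is the class of functions $x\mapsto1-2I(x\in D)$ with $D\subseteq\mathcal{X}$, $|D|\le l$; $\mathcal{H}^l=\{x\mapsto h(x)c(x):h\in\mathcal{H},c\in\mathcal{C}^l\}$. Extended mistake tree w.r.t. a class $\mathcal{F}$: a finite full binary tree (possibly a single leaf) in which each internal node $v$ is labeled by a point $x_v\in\mathcal{X}$ and has two solid downward edges, to its left child (label $-1$) and right child (label $+1$), plus one dashed downward edge going to one of its two children; each leaf is labeled by some $h\in\mathcal{F}$ with $h(x_v)$ equal to the direction label ($-1$ left, $+1$ right) at every internal node $v$ on the path from the root to that leaf. A root-to-leaf path chooses at each internal node one of its downward edges; its length is its number of edges. The tree is $(k,m)$-difficult if every root-to-leaf path using at most $k$ solid edges has length at least $m$. The extended Littlestone dimension $\mathrm{ELdim}(\mathcal{F},k)$ is the supremum of $m$ such that a $(k,m)$-difficult extended mistake tree w.r.t. $\mathcal{F}$ exists (possibly $\infty$). *)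

theory Defs
  imports Complex_Main "HOL-Library.Extended_Real"
begin

text \<open>Hypotheses are maps into {-1,+1}, represented as functions into int.\<close>

definition classC :: "nat \<Rightarrow> ('x \<Rightarrow> int) set" where
  "classC l = {(\<lambda>x. 1 - 2 * (if x \<in> D then 1 else 0)) | D. finite D \<and> card D \<le> l}"

definition classHl :: "('x \<Rightarrow> int) set \<Rightarrow> nat \<Rightarrow> ('x \<Rightarrow> int) set" where
  "classHl H l = {(\<lambda>x. h x * c x) | h c. h \<in> H \<and> c \<in> classC l}"

text \<open>Extended mistake trees: a node carries a point, the direction of its dashed edge
  (True = dashed edge goes to the right child, False = to the left child),
  and its left (label -1) and right (label +1) subtrees.\<close>

datatype ('x, 'h) emtree = Leaf 'h | Node 'x bool "('x, 'h) emtree" "('x, 'h) emtree"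

fun emt_ok :: "('x \<Rightarrow> int) set \<Rightarrow> (('x \<Rightarrow> int) \<Rightarrow> bool) \<Rightarrow> ('x, 'x \<Rightarrow> int) emtree \<Rightarrow> bool" where
  "emt_ok F P (Leaf h) = (h \<in> F \<and> P h)"
| "emt_ok F P (Node x d l r) =
     (emt_ok F (\<lambda>h. P h \<and> h x = -1) l \<and> emt_ok F (\<lambda>h. P h \<and> h x = 1) r)"

definition is_emtree :: "('x \<Rightarrow> int) set \<Rightarrow> ('x, 'x \<Rightarrow> int) emtree \<Rightarrow> bool" where
  "is_emtree F t = emt_ok F (\<lambda>_. True) t"

text \<open>difficult k m t: every root-to-leaf path of t using at most k solid edges
  has length at least m.\<close>

fun difficult :: "nat \<Rightarrow> nat \<Rightarrow> ('x, 'h) emtree \<Rightarrow> bool" where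
  "difficult k m (Leaf h) = (m \<le> 0)"
| "difficult k m (Node x d l r) =
     ((0 < k \<longrightarrow> difficult (k - 1) (m - 1) l \<and> difficult (k - 1) (m - 1) r)
      \<and> difficult k (m - 1) (if d then r else l))"

definition ELdim :: "('x \<Rightarrow> int) set \<Rightarrow> nat \<Rightarrow> enat" where
  "ELdim F k = Sup {enat m | m. \<exists>t. is_emtree F t \<and> difficult k m t}"

end

theory Submission
  imports Defs
begin

text \<open>
  Walk down a tree of the class \<open>H\<^sup>l\<close> at random: at a node with \<open>m\<close> edges still to go
  and \<open>b - 1\<close> solid edges still allowed, take the solid edge to the non-dashed child with
  probability \<open>min 1 (b / m)\<close> and the dashed edge otherwise. For \<open>h \<in> H\<close> let \<open>R h\<close> be
  \<open>l\<close> minus the number of points on the path where \<open>h\<close> disagrees with the edge label; at a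
  leaf some \<open>h\<close> still has \<open>R h \<ge> 0\<close>. The potential
  \<open>potential m b r = min 1 (C(m, r) / C(m, b))\<close> is superharmonic for this walk by Pascal's rule and
  absorption, so \<open>\<Sum>h. potential m b (R h) \<ge> 1\<close> propagates from the leaves to the root, where it
  reads \<open>C(m, k + 1) \<le> |H| C(m, l)\<close>. As \<open>C(m, s + 1) / C(m, s) \<ge> m / (2 (k + 1))\<close> for
  \<open>s \<le> k\<close> once \<open>m \<ge> 2 (k + 1)\<close>, this gives \<open>m \<le> 2 (k + 1) |H| ^ (1 / (k + 1 - l))\<close>,
  which is even slightly better than the bound with \<open>e\<close>.
\<close>

definition binom :: "nat \<Rightarrow> int \<Rightarrow> real" where
  "binom m r = (if r < 0 then 0 else real (m choose nat r))"

lemma binom_nonneg: "0 \<le> binom m r"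
  by (simp add: binom_def)

lemma binom_pascal: "0 < m \<Longrightarrow> binom m r = binom (m - 1) r + binom (m - 1) (r - 1)"
  using choose_reduce_nat[of m "nat r"]
  by (cases "r \<le> 0") (auto simp: binom_def nat_diff_distrib)

definition potential :: "nat \<Rightarrow> nat \<Rightarrow> int \<Rightarrow> real" where
  "potential m b r =
     (if m < b \<or> int b \<le> r then 1 else min 1 (binom m r / real (m choose b)))"

lemma potential_le_1: "potential m b r \<le> 1"
  by (simp add: potential_def)

lemma potential_nonneg: "0 \<le> potential m b r"
  by (simp add: potential_def binom_nonneg)

lemma potential_eq_1: "m < b \<or> int b \<le> r \<Longrightarrow> potential m b r = 1"
  by (simp add: potential_def)

lemma potential_le_ratio:
  assumes "b \<le> m" and "r \<le> int b"
  shows "potential m b r \<le> binom m r / real (m choose b)"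
proof (cases "r = int b")
  case True
  then show ?thesis
    using assms(1) by (simp add: potential_def binom_def)
next
  case False
  then show ?thesis
    using assms by (simp add: potential_def)
qed

lemma potential_superharmonic:
  assumes "0 < m" and "0 < b"
    and r12: "(r1 = r \<and> r2 = r - 1) \<or> (r1 = r - 1 \<and> r2 = r)"
  defines "\<mu> \<equiv> min 1 (real b / real m)"
  shows "(1 - \<mu>) * potential (m - 1) b r1 + \<mu> * potential (m - 1) (b - 1) r2 \<le> potential m b r"
    (is "?lhs \<le> _")
proof -
  have \<mu>: "0 \<le> \<mu>" "\<mu> \<le> 1"
    by (simp_all add: \<mu>_def)
  have "?lhs \<le> (1 - \<mu>) * 1 + \<mu> * 1"
    using \<mu> by (intro add_mono mult_left_mono potential_le_1) auto
  then have lhs_le_1: "?lhs \<le> 1"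
    by simp
  have binom_split: "binom (m - 1) r1 + binom (m - 1) r2 = binom m r"
    using binom_pascal[OF \<open>0 < m\<close>, of r] r12 by auto
  consider (trivial) "m < b \<or> int b \<le> r" | (diagonal) "b = m" "r < int b"
    | (inner) "b < m" "r < int b"
    by linarith
  then show ?thesis
  proof cases
    case trivial
    then show ?thesis
      using lhs_le_1 by (simp add: potential_eq_1)
  next
    case diagonal
    then have "?lhs = potential (m - 1) (m - 1) r2"
      using \<open>0 < m\<close> by (simp add: \<mu>_def)
    also have "\<dots> \<le> binom (m - 1) r2"
      using potential_le_ratio[of "m - 1" "m - 1" r2] r12 diagonal by auto
    also have "\<dots> \<le> binom m r / real (m choose b)"
      using binom_split binom_nonneg[of "m - 1" r1] diagonal by simp
    finally show ?thesis
      using lhs_le_1 diagonal by (simp add: potential_def)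
  next
    case inner
    have \<mu>_eq: "\<mu> = real b / real m"
      using inner by (simp add: \<mu>_def)
    have "real (m - b) * real (m choose b) = real m * real ((m - 1) choose b)"
      using binomial_absorb_comp[of m b] by (metis of_nat_mult)
    then have absorb_comp: "(1 - \<mu>) / real ((m - 1) choose b) = 1 / real (m choose b)"
      using inner by (simp add: \<mu>_eq field_simps of_nat_diff)
    have "real b * real (m choose b) = real m * real ((m - 1) choose (b - 1))"
      using times_binomial_minus1_eq[OF \<open>0 < b\<close>, of m] by (metis of_nat_mult)
    then have absorb: "\<mu> / real ((m - 1) choose (b - 1)) = 1 / real (m choose b)"
      using inner by (simp add: \<mu>_eq field_simps)
    have "?lhs \<le> (1 - \<mu>) * (binom (m - 1) r1 / real ((m - 1) choose b))
                + \<mu> * (binom (m - 1) r2 / real ((m - 1) choose (b - 1)))"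
      using \<mu> r12 inner
      by (intro add_mono mult_left_mono potential_le_ratio) auto
    also have "\<dots> = binom (m - 1) r1 * ((1 - \<mu>) / real ((m - 1) choose b))
                + binom (m - 1) r2 * (\<mu> / real ((m - 1) choose (b - 1)))"
      by (simp add: mult.commute)
    also have "\<dots> = binom m r / real (m choose b)"
      unfolding absorb_comp absorb binom_split[symmetric] by (simp add: add_divide_distrib)
    finally show ?thesis
      using lhs_le_1 inner by (simp add: potential_def)
  qed
qed

lemma potential_sum_step:
  assumes "0 < m" and "0 < b"
    and split: "\<forall>h\<in>H. (R1 h = R h \<and> R2 h = R h - 1) \<or> (R1 h = R h - 1 \<and> R2 h = R h)"
    and dashed: "1 \<le> (\<Sum>h\<in>H. potential (m - 1) b (R1 h))"
    and solid: "1 \<le> (\<Sum>h\<in>H. potential (m - 1) (b - 1) (R2 h))"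
  shows "1 \<le> (\<Sum>h\<in>H. potential m b (R h))"
proof -
  define \<mu> where "\<mu> = min 1 (real b / real m)"
  have \<mu>: "0 \<le> \<mu>" "\<mu> \<le> 1"
    by (simp_all add: \<mu>_def)
  have "1 = (1 - \<mu>) * 1 + \<mu> * 1"
    by simp
  also have "\<dots> \<le> (1 - \<mu>) * (\<Sum>h\<in>H. potential (m - 1) b (R1 h))
            + \<mu> * (\<Sum>h\<in>H. potential (m - 1) (b - 1) (R2 h))"
    using \<mu> dashed solid by (intro add_mono mult_left_mono) auto
  also have "\<dots> = (\<Sum>h\<in>H. (1 - \<mu>) * potential (m - 1) b (R1 h)
                           + \<mu> * potential (m - 1) (b - 1) (R2 h))"
    by (simp add: sum_distrib_left sum.distrib)
  also have "\<dots> \<le> (\<Sum>h\<in>H. potential m b (R h))"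
    using split potential_superharmonic[OF \<open>0 < m\<close> \<open>0 < b\<close>]
    by (intro sum_mono) (auto simp: \<mu>_def)
  finally show ?thesis .
qed

definition flip_on :: "'x set \<Rightarrow> ('x \<Rightarrow> int) \<Rightarrow> 'x \<Rightarrow> int" where
  "flip_on D h = (\<lambda>x. h x * (1 - 2 * (if x \<in> D then 1 else 0)))"

lemma mem_classHlE:
  assumes "g \<in> classHl H l"
  obtains h D where "h \<in> H" "finite D" "card D \<le> l" "g = flip_on D h"
  using assms unfolding classHl_def classC_def flip_on_def by blast

lemma emt_ok_consistent: "emt_ok F P t \<Longrightarrow> \<exists>g\<in>F. P g"
  by (induction t arbitrary: P) auto

text \<open>\<open>P\<close> collects the edge labels along the path so far and \<open>V\<close> its points; \<open>R h\<close> bounds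
  from below the number of corrections that any path-consistent \<open>flip_on D h\<close> makes off \<open>V\<close>.\<close>

definition budget_invariant ::
    "('x \<Rightarrow> int) set \<Rightarrow> nat \<Rightarrow> (('x \<Rightarrow> int) \<Rightarrow> bool) \<Rightarrow> (('x \<Rightarrow> int) \<Rightarrow> int) \<Rightarrow> 'x set \<Rightarrow> bool"
  where "budget_invariant H l P R V \<longleftrightarrow>
    (\<forall>h\<in>H. \<forall>D. finite D \<longrightarrow> P (flip_on D h) \<longrightarrow> int l - int (card (D \<inter> V)) \<le> R h)"

definition determined_on :: "(('x \<Rightarrow> int) \<Rightarrow> bool) \<Rightarrow> 'x set \<Rightarrow> bool" where
  "determined_on P V \<longleftrightarrow> (\<forall>y\<in>V. \<exists>v. \<forall>g. P g \<longrightarrow> g y = v)"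

lemma budget_invariant_nonneg:
  assumes "emt_ok (classHl H l) P t" and "budget_invariant H l P R V"
  shows "\<exists>h\<in>H. 0 \<le> R h"
proof -
  obtain h D where "h \<in> H" "finite D" "card D \<le> l" "P (flip_on D h)"
    using emt_ok_consistent[OF assms(1)] by (metis mem_classHlE)
  moreover have "card (D \<inter> V) \<le> card D"
    using \<open>finite D\<close> by (simp add: card_mono)
  ultimately show ?thesis
    using assms(2) unfolding budget_invariant_def by force
qed

lemma budget_invariant_child:
  assumes H: "\<forall>h\<in>H. \<forall>x. h x \<in> {-1, 1}"
    and inv: "budget_invariant H l P R V" and "x \<notin> V" and "v \<in> {-1, 1}"
  shows "budget_invariant H l (\<lambda>g. P g \<and> g x = v)
           (\<lambda>h. if h x = v then R h else R h - 1) (insert x V)"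
  unfolding budget_invariant_def
proof (intro ballI allI impI)
  fix h D
  assume "h \<in> H" and "finite D" and P: "P (flip_on D h) \<and> flip_on D h x = v"
  then have IH: "int l - int (card (D \<inter> V)) \<le> R h"
    using inv unfolding budget_invariant_def by blast
  have "h x \<in> {-1, 1}"
    using H \<open>h \<in> H\<close> by blast
  then have "x \<in> D \<longleftrightarrow> h x \<noteq> v"
    using P \<open>v \<in> {-1, 1}\<close> by (auto simp: flip_on_def split: if_splits)
  moreover have "card (D \<inter> insert x V) = (if x \<in> D then Suc (card (D \<inter> V)) else card (D \<inter> V))"
    using \<open>finite D\<close> \<open>x \<notin> V\<close> by auto
  ultimately show "int l - int (card (D \<inter> insert x V)) \<le> (if h x = v then R h else R h - 1)"
    using IH by auto
qed

lemma determined_on_child: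
  "determined_on P V \<Longrightarrow> determined_on (\<lambda>g. P g \<and> g x = v) (insert x V)"
  unfolding determined_on_def by blast

lemma node_point_not_determined:
  assumes "emt_ok F (\<lambda>g. P g \<and> g x = -1) lt" and "emt_ok F (\<lambda>g. P g \<and> g x = 1) rt"
    and "determined_on P V"
  shows "x \<notin> V"
proof
  assume "x \<in> V"
  then obtain v where "\<forall>g. P g \<longrightarrow> g x = v"
    using assms(3) unfolding determined_on_def by blast
  moreover obtain g1 g2 where "P g1" "g1 x = -1" "P g2" "g2 x = 1"
    using emt_ok_consistent[OF assms(1)] emt_ok_consistent[OF assms(2)] by blast
  ultimately have "-1 = (1::int)"
    by metis
  then show False
    by simp
qed

lemma potential_sum_ge_1_trivial:
  assumes "finite H" and "emt_ok (classHl H l) P t" and "budget_invariant H l P R V"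
    and "b = 0 \<or> m = 0"
  shows "1 \<le> (\<Sum>h\<in>H. potential m b (R h))"
proof -
  obtain h where "h \<in> H" "0 \<le> R h"
    using budget_invariant_nonneg[OF assms(2,3)] by blast
  then have "potential m b (R h) = 1"
    using assms(4) by (auto intro: potential_eq_1)
  moreover have "potential m b (R h) \<le> (\<Sum>h\<in>H. potential m b (R h))"
    using \<open>h \<in> H\<close> \<open>finite H\<close> by (intro member_le_sum potential_nonneg)
  ultimately show ?thesis
    by simp
qed

lemma potential_sum_node:
  fixes H :: "('x \<Rightarrow> int) set" and R :: "('x \<Rightarrow> int) \<Rightarrow> int"
  assumes H: "\<forall>h\<in>H. h x \<in> {-1, 1}" and "0 < m" and "0 < b"
    and difficult: "difficult (b - 1) m (Node x d lt rt)"
    and left: "\<And>b'. (0 < b' \<Longrightarrow> difficult (b' - 1) (m - 1) lt) \<Longrightarrow>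
      1 \<le> (\<Sum>h\<in>H. potential (m - 1) b' (if h x = -1 then R h else R h - 1))"
    and right: "\<And>b'. (0 < b' \<Longrightarrow> difficult (b' - 1) (m - 1) rt) \<Longrightarrow>
      1 \<le> (\<Sum>h\<in>H. potential (m - 1) b' (if h x = 1 then R h else R h - 1))"
  shows "1 \<le> (\<Sum>h\<in>H. potential m b (R h))"
proof -
  define v where "v = (if d then 1 else -1 :: int)"
  define R' where "R' w h = (if h x = w then R h else R h - 1)" for w h
  have difficult_children:
    "0 < b - 1 \<Longrightarrow> difficult (b - 1 - 1) (m - 1) lt \<and> difficult (b - 1 - 1) (m - 1) rt"
    "difficult (b - 1) (m - 1) (if d then rt else lt)"
    using difficult \<open>0 < b\<close> by simp_all
  have children: "1 \<le> (\<Sum>h\<in>H. potential (m - 1) b (R' v h))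
    \<and> 1 \<le> (\<Sum>h\<in>H. potential (m - 1) (b - 1) (R' (-v) h))"
  proof (cases d)
    case True
    then show ?thesis
      using right[of b] left[of "b - 1"] difficult_children unfolding v_def R'_def by simp
  next
    case False
    then show ?thesis
      using left[of b] right[of "b - 1"] difficult_children unfolding v_def R'_def by simp
  qed
  have "\<forall>h\<in>H. (R' v h = R h \<and> R' (-v) h = R h - 1) \<or> (R' v h = R h - 1 \<and> R' (-v) h = R h)"
    using H by (auto simp: R'_def v_def)
  then show ?thesis
    using potential_sum_step[OF \<open>0 < m\<close> \<open>0 < b\<close>] children by blast
qed

text \<open>Here \<open>b\<close> is one more than the number of solid edges still allowed, so that \<open>b = 0\<close>
  imposes nothing on \<open>t\<close>; accordingly \<open>potential m 0 r = 1\<close> for \<open>r \<ge> 0\<close>.\<close>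

lemma potential_sum_ge_1:
  assumes H: "\<forall>h\<in>H. \<forall>x. h x \<in> {-1, 1}" and "finite H"
  shows "emt_ok (classHl H l) P t \<Longrightarrow> (0 < b \<Longrightarrow> difficult (b - 1) m t)
    \<Longrightarrow> budget_invariant H l P R V \<Longrightarrow> determined_on P V
    \<Longrightarrow> 1 \<le> (\<Sum>h\<in>H. potential m b (R h))"
proof (induction t arbitrary: P R V b m)
  case (Leaf g)
  then have "b = 0 \<or> m = 0"
    by auto
  then show ?case
    using potential_sum_ge_1_trivial[OF \<open>finite H\<close> Leaf.prems(1,3)] by blast
next
  case (Node x d lt rt)
  show ?case
  proof (cases "b = 0 \<or> m = 0")
    case True
    then show ?thesis
      using potential_sum_ge_1_trivial[OF \<open>finite H\<close> Node.prems(1,3)] by blast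
  next
    case False
    then have "0 < b" "0 < m"
      by auto
    have ok: "emt_ok (classHl H l) (\<lambda>g. P g \<and> g x = -1) lt"
      "emt_ok (classHl H l) (\<lambda>g. P g \<and> g x = 1) rt"
      using Node.prems(1) by simp_all
    have "x \<notin> V"
      using node_point_not_determined[OF ok Node.prems(4)] .
    note child_invariants = budget_invariant_child[OF H Node.prems(3) \<open>x \<notin> V\<close>]
      determined_on_child[OF Node.prems(4)]
    show ?thesis
    proof (rule potential_sum_node[OF _ \<open>0 < m\<close> \<open>0 < b\<close> Node.prems(2)[OF \<open>0 < b\<close>]])
      show "\<forall>h\<in>H. h x \<in> {-1, 1}"
        using H by blast
      show "1 \<le> (\<Sum>h\<in>H. potential (m - 1) b' (if h x = -1 then R h else R h - 1))"
        if "0 < b' \<Longrightarrow> difficult (b' - 1) (m - 1) lt" for b'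
        using Node.IH(1)[OF ok(1) that child_invariants(1)[of "-1"] child_invariants(2)] by simp
      show "1 \<le> (\<Sum>h\<in>H. potential (m - 1) b' (if h x = 1 then R h else R h - 1))"
        if "0 < b' \<Longrightarrow> difficult (b' - 1) (m - 1) rt" for b'
        using Node.IH(2)[OF ok(2) that child_invariants(1)[of 1] child_invariants(2)] by simp
    qed
  qed
qed

lemma choose_Suc_ge:
  assumes "2 * b \<le> m" and "s < b"
  shows "real m / (2 * real b) * real (m choose s) \<le> real (m choose Suc s)"
proof -
  have "Suc s * (m choose Suc s) = (m - s) * (m choose s)"
    using times_binomial_minus1_eq[of "Suc s" m] binomial_absorb_comp[of m s] by simp
  then have "real (Suc s) * real (m choose Suc s) = real (m - s) * real (m choose s)"
    by (metis of_nat_mult)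
  moreover have "real (m - s) = real m - real s"
    using assms by (simp add: of_nat_diff)
  ultimately have "(real s + 1) * real (m choose Suc s) = (real m - real s) * real (m choose s)"
    by (simp add: add.commute)
  then have absorb: "real (m choose Suc s) = (real m - real s) / (real s + 1) * real (m choose s)"
    by (simp add: field_simps)
  have "real m * (real s + 1) \<le> real m * real b"
    using assms(2) by (intro mult_left_mono) auto
  also have "\<dots> \<le> real b * (2 * (real m - real s))"
    using assms by (simp add: algebra_simps mult_left_mono)
  finally have "real m / (2 * real b) \<le> (real m - real s) / (real s + 1)"
    using assms(2) by (simp add: field_simps)
  then show ?thesis
    unfolding absorb by (intro mult_right_mono) auto
qed

lemma choose_growth:
  assumes "2 * b \<le> m" and "l + d \<le> b"
  shows "real (m choose l) * (real m / (2 * real b)) ^ d \<le> real (m choose (l + d))"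
  using assms(2)
proof (induction d)
  case 0
  then show ?case
    by simp
next
  case (Suc d)
  have "real (m choose l) * (real m / (2 * real b)) ^ Suc d
        = real m / (2 * real b) * (real (m choose l) * (real m / (2 * real b)) ^ d)"
    by simp
  also have "\<dots> \<le> real m / (2 * real b) * real (m choose (l + d))"
    using Suc by (intro mult_left_mono) auto
  also have "\<dots> \<le> real (m choose Suc (l + d))"
    using Suc.prems assms(1) by (intro choose_Suc_ge) auto
  finally show ?case
    by simp
qed

lemma length_bound:
  fixes N :: real
  assumes pot: "1 \<le> N * potential m b (int l)" and "l < b"
  shows "real m \<le> 2 * real b * N powr (1 / real (b - l))"
proof -
  have "1 \<le> N"
    using pot potential_nonneg[of m b "int l"] potential_le_1[of m b "int l"]
    by (smt (verit) mult_left_le mult_nonpos_nonneg)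
  show ?thesis
  proof (cases "real m \<le> 2 * real b")
    case True
    have "1 \<le> N powr (1 / real (b - l))"
      using \<open>1 \<le> N\<close> \<open>l < b\<close> by (simp add: ge_one_powr_ge_zero)
    then have "2 * real b * 1 \<le> 2 * real b * N powr (1 / real (b - l))"
      by (intro mult_left_mono) auto
    then show ?thesis
      using True by linarith
  next
    case False
    then have "2 * b \<le> m" "b \<le> m"
      by linarith+
    define q where "q = real m / (2 * real b)"
    have "q > 0"
      using \<open>l < b\<close> \<open>b \<le> m\<close> by (simp add: q_def)
    have "potential m b (int l) \<le> real (m choose l) / real (m choose b)"
      using potential_le_ratio[OF \<open>b \<le> m\<close>, of "int l"] \<open>l < b\<close> by (simp add: binom_def)
    then have "1 \<le> N * (real (m choose l) / real (m choose b))"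
      using pot \<open>1 \<le> N\<close> by (meson order_trans mult_left_mono zero_le_one)
    then have "real (m choose b) \<le> N * real (m choose l)"
      using \<open>b \<le> m\<close> by (simp add: field_simps)
    moreover have "real (m choose l) * q ^ (b - l) \<le> real (m choose b)"
      using choose_growth[OF \<open>2 * b \<le> m\<close>, of l "b - l"] \<open>l < b\<close> by (simp add: q_def)
    ultimately have "real (m choose l) * q ^ (b - l) \<le> real (m choose l) * N"
      by (simp add: mult.commute)
    then have "q ^ (b - l) \<le> N"
      using \<open>l < b\<close> \<open>b \<le> m\<close> by simp
    have "q = (q ^ (b - l)) powr (1 / real (b - l))"
      using \<open>q > 0\<close> \<open>l < b\<close> by (simp add: powr_realpow[symmetric] powr_powr)
    also have "\<dots> \<le> N powr (1 / real (b - l))"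
      using \<open>q ^ (b - l) \<le> N\<close> \<open>q > 0\<close> by (intro powr_mono2) auto
    finally have "q \<le> N powr (1 / real (b - l))" .
    then show ?thesis
      using \<open>l < b\<close> by (simp add: q_def field_simps)
  qed
qed

lemma ELdim_le:
  assumes "0 \<le> B" and "\<And>m t. is_emtree F t \<Longrightarrow> difficult k m t \<Longrightarrow> real m \<le> B"
  shows "ereal_of_enat (ELdim F k) \<le> ereal B"
proof -
  have "ELdim F k \<le> enat (nat \<lfloor>B\<rfloor>)"
    unfolding ELdim_def
  proof (rule Sup_least)
    fix y
    assume "y \<in> {enat m |m. \<exists>t. is_emtree F t \<and> difficult k m t}"
    then obtain m where "y = enat m" "real m \<le> B"
      using assms(2) by blast
    then show "y \<le> enat (nat \<lfloor>B\<rfloor>)"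
      by (simp add: le_nat_floor)
  qed
  then have "ereal_of_enat (ELdim F k) \<le> ereal_of_enat (enat (nat \<lfloor>B\<rfloor>))"
    by (simp only: ereal_of_enat_le_iff)
  also have "\<dots> = ereal (real (nat \<lfloor>B\<rfloor>))"
    by simp
  also have "\<dots> \<le> ereal B"
    using assms(1) by simp
  finally show ?thesis .
qed

theorem mainTheorem5:
  fixes H :: "('x \<Rightarrow> int) set" and k l :: nat
  assumes "finite H"
    and "\<forall>h\<in>H. \<forall>x. h x \<in> {-1, 1}"
    and "l \<le> k"
  shows "ereal_of_enat (ELdim (classHl H l) k)
           \<le> ereal (exp 1 * real (k + 1) * real (card H) powr (1 / real (k + 1 - l)))"
proof (rule ELdim_le)
  fix m t
  assume "is_emtree (classHl H l) t" and "difficult k m t"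
  moreover have "budget_invariant H l (\<lambda>_. True) (\<lambda>_. int l) {}" "determined_on (\<lambda>_. True) {}"
    by (simp_all add: budget_invariant_def determined_on_def)
  ultimately have "1 \<le> (\<Sum>h\<in>H. potential m (k + 1) (int l))"
    using potential_sum_ge_1[OF assms(2,1), of l "\<lambda>_. True" t "k + 1" m "\<lambda>_. int l" "{}"]
    unfolding is_emtree_def by simp
  then have "real m \<le> 2 * real (k + 1) * real (card H) powr (1 / real (k + 1 - l))"
    using length_bound[of "real (card H)" m "k + 1" l] \<open>l \<le> k\<close> by simp
  also have "\<dots> \<le> exp 1 * real (k + 1) * real (card H) powr (1 / real (k + 1 - l))"
    using exp_ge_add_one_self[of 1] by (intro mult_right_mono) auto
  finally show "real m \<le> exp 1 * real (k + 1) * real (card H) powr (1 / real (k + 1 - l))" .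
qed simp

end
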